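(* Let $N\ge1$, $H=(H_1,\dots,H_N)\in]0,1[^N$, $a\in\mathbb{R}^N\setminus\{(0,\dots,0)\}$ and let $S^H$ be the mixed sub-fractional Brownian motion with parameters $N,a,H$. Then for every $t_0\in[0,\infty)$, with probability one, $$\lim_{\epsilon\to0^+}\ \sup_{t\in[t_0-\epsilon,t_0+\epsilon]\cap[0,\infty),\ t\neq t_0}\left|\frac{S^H(t)-S^H(t_0)}{t-t_0}\right|=+\infty.$$
   Context: Let $(\Omega,\mathcal F,\mathbb P)$ be a probability space. For $K\in]0,1[$, a fractional Brownian motion on $\mathbb{R}$ with Hurst index $K$ is a continuous centered Gaussian process $\{B^K(t),t\in\mathbb{R}\}$ with $\mathrm{Cov}(B^K(t),B^K(s))=\frac12(|t|^{2K}+|s|^{2K}-|t-s|^{2K})$. The sub-fractional Brownian motion (sfBm) of index $K$ is $\xi^K_t=(B^K_t+B^K_{-t})/\sqrt2$, $t\ge0$; it is a continuous centered Gaussian process with $\mathrm{Cov}(\xi^K_t,\xi^K_s)=s^{2K}+t^{2K}-\frac12\big((s+t)^{2K}+|t-s|^{2K}\big)$. For $N\ge1$, $H\in]0,1[^N$, $a\in\mathbb{R}^N\setminus\{0\}$, the mixed sub-fractional Brownian motion (msfBm) is $S^H(t)=\sum_{i=1}^N a_i\xi^{H_i}(t)$, $t\ge0$, where $\xi^{H_1},\dots,\xi^{H_N}$ are independent sfBms with indices $H_1,\dots,H_N$. *)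

theory Defs
  imports "HOL-Probability.Probability"
begin

definition gaussian_rv :: "'a measure \<Rightarrow> ('a \<Rightarrow> real) \<Rightarrow> bool" where
  "gaussian_rv M X \<longleftrightarrow> X \<in> borel_measurable M \<and>
     ((\<exists>c. AE \<omega> in M. X \<omega> = c) \<or>
      (\<exists>\<mu> \<sigma>. \<sigma> > 0 \<and> distributed M lborel X (normal_density \<mu> \<sigma>)))"

definition gaussian_process :: "'a measure \<Rightarrow> real set \<Rightarrow> (real \<Rightarrow> 'a \<Rightarrow> real) \<Rightarrow> bool" where
  "gaussian_process M T X \<longleftrightarrow>
     (\<forall>F c. finite F \<longrightarrow> F \<subseteq> T \<longrightarrow> gaussian_rv M (\<lambda>\<omega>. \<Sum>t\<in>F. c t * X t \<omega>))"

definition sfbm_cov :: "real \<Rightarrow> real \<Rightarrow> real \<Rightarrow> real" where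
  "sfbm_cov K s t = s powr (2*K) + t powr (2*K)
      - (1/2) * ((s + t) powr (2*K) + \<bar>t - s\<bar> powr (2*K))"

definition is_sfbm :: "'a measure \<Rightarrow> real \<Rightarrow> (real \<Rightarrow> 'a \<Rightarrow> real) \<Rightarrow> bool" where
  "is_sfbm M K \<xi> \<longleftrightarrow>
     (\<forall>t\<in>{0..}. \<xi> t \<in> borel_measurable M) \<and>
     (\<forall>\<omega>\<in>space M. continuous_on {0..} (\<lambda>t. \<xi> t \<omega>)) \<and>
     gaussian_process M {0..} \<xi> \<and>
     (\<forall>t\<in>{0..}. integrable M (\<xi> t) \<and> (\<integral>\<omega>. \<xi> t \<omega> \<partial>M) = 0) \<and>
     (\<forall>s\<in>{0..}. \<forall>t\<in>{0..}. (\<integral>\<omega>. \<xi> t \<omega> * \<xi> s \<omega> \<partial>M) = sfbm_cov K s t)"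

definition msfbm :: "nat \<Rightarrow> (nat \<Rightarrow> real) \<Rightarrow> (nat \<Rightarrow> real \<Rightarrow> 'a \<Rightarrow> real) \<Rightarrow> real \<Rightarrow> 'a \<Rightarrow> real" where
  "msfbm N a \<xi> t \<omega> = (\<Sum>i<N. a i * \<xi> i t \<omega>)"

end

(*
  Choose i with a_i \<noteq> 0. For h > 0 the increment S(t0 + h) - S(t0) splits into
  a_i (\<xi>_i(t0 + h) - \<xi>_i(t0)), a centred Gaussian whose variance a_i^2 \<sigma>^2(h) satisfies
  \<sigma>^2(h) \<ge> c h^(2 H_i) - C h^2 and hence \<sigma>(h) / h \<rightarrow> \<infinity>, plus an independent remainder.
  A Gaussian density is bounded by 1/\<sigma>, so P(|S(t0 + h) - S(t0)| \<le> m h) \<le> 2 m h / (|a_i| \<sigma>(h)),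
  which tends to 0 as h \<rightarrow> 0+. Consequently, along h_n = 1/(n + 1) the event that
  |S(t0 + h_n) - S(t0)| \<le> m h_n for all n \<ge> k is null, i.e. almost surely every bound m on
  the difference quotient fails at arbitrarily small h.
*)
theory Submission
  imports Defs "HOL-Real_Asymp.Real_Asymp"
begin

lemma second_difference_le:
  fixes f f' f'' :: "real \<Rightarrow> real"
  assumes h: "0 < h" and D: "0 \<le> D"
    and f': "\<And>x. u \<le> x \<Longrightarrow> x \<le> u + 2 * h \<Longrightarrow> (f has_real_derivative f' x) (at x)"
    and f'': "\<And>x. u \<le> x \<Longrightarrow> x \<le> u + 2 * h \<Longrightarrow> (f' has_real_derivative f'' x) (at x)"
    and f''_le: "\<And>x. u \<le> x \<Longrightarrow> x \<le> u + 2 * h \<Longrightarrow> f'' x \<le> D"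
  shows "f (u + 2 * h) - 2 * f (u + h) + f u \<le> 2 * D * h\<^sup>2"
proof -
  obtain z1 where z1: "u + h < z1" "z1 < u + 2 * h" "f (u + 2 * h) - f (u + h) = h * f' z1"
    using MVT2[of "u + h" "u + 2 * h" f f'] h f' by auto
  obtain z2 where z2: "u < z2" "z2 < u + h" "f (u + h) - f u = h * f' z2"
    using MVT2[of u "u + h" f f'] h f' by auto
  obtain z3 where z3: "z2 < z3" "z3 < z1" "f' z1 - f' z2 = (z1 - z2) * f'' z3"
    using MVT2[of z2 z1 f' f''] z1 z2 f'' by auto
  have "f (u + 2 * h) - 2 * f (u + h) + f u = h * (f' z1 - f' z2)"
    using z1(3) z2(3) by (simp add: algebra_simps)
  also have "\<dots> = h * ((z1 - z2) * f'' z3)"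
    by (simp only: z3(3))
  also have "\<dots> \<le> h * ((z1 - z2) * D)"
    using z1 z2 z3 h f''_le[of z3] by (intro mult_left_mono) auto
  also have "\<dots> \<le> h * (2 * h * D)"
    using z1 z2 h D by (intro mult_left_mono mult_right_mono) auto
  finally show ?thesis
    by (simp add: power2_eq_square ac_simps)
qed

lemma powr_second_difference_le:
  fixes u h p :: real
  assumes u: "0 < u" and h: "0 < h" and p: "0 \<le> p" "p \<le> 2"
  shows "(u + 2 * h) powr p - 2 * (u + h) powr p + u powr p
           \<le> 2 * (p * \<bar>p - 1\<bar> * u powr (p - 2)) * h\<^sup>2"
proof (rule second_difference_le[OF h])
  fix x assume x: "u \<le> x"
  show "((\<lambda>x. x powr p) has_real_derivative p * x powr (p - 1)) (at x)"
    using u x by (intro has_real_derivative_powr) auto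
  show "((\<lambda>x. p * x powr (p - 1)) has_real_derivative p * ((p - 1) * x powr (p - 2))) (at x)"
    using has_real_derivative_powr[of x "p - 1"] u x by (auto intro!: DERIV_cmult)
  have "x powr (p - 2) \<le> u powr (p - 2)"
    using u x p by (intro powr_mono2') auto
  then show "p * ((p - 1) * x powr (p - 2)) \<le> p * \<bar>p - 1\<bar> * u powr (p - 2)"
    using p by (simp add: mult.assoc mult_left_mono abs_ge_self mult_mono)
qed (use p in auto)

definition sfbm_incr_var :: "real \<Rightarrow> real \<Rightarrow> real \<Rightarrow> real" where
  "sfbm_incr_var K s h = sfbm_cov K (s + h) (s + h) - 2 * sfbm_cov K s (s + h) + sfbm_cov K s s"

lemma sfbm_incr_var_eq:
  assumes "0 \<le> h"
  shows "sfbm_incr_var K s h = h powr (2 * K)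
           - ((2 * s + 2 * h) powr (2 * K) - 2 * (2 * s + h) powr (2 * K) + (2 * s) powr (2 * K)) / 2"
  using assms by (simp add: sfbm_incr_var_def sfbm_cov_def algebra_simps) argo

(* For s > 0 the subtracted term is a second difference of x powr 2K at 2s, hence O(h^2);
   for s = 0 the increment variance is a positive multiple of h powr 2K. *)
lemma sfbm_incr_var_lower_bound:
  assumes K: "0 < K" "K < 1" and s: "0 \<le> s"
  obtains c C where "0 < c" "\<And>h. 0 < h \<Longrightarrow> c * h powr (2 * K) - C * h\<^sup>2 \<le> sfbm_incr_var K s h"
proof (cases "s = 0")
  case True
  have "2 powr (2 * K) < 2 powr 2"
    using K by (intro powr_less_mono) auto
  then have c: "0 < 2 - 2 powr (2 * K) / 2"
    by simp
  show ?thesis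
  proof (rule that[OF c])
    fix h :: real assume "0 < h"
    then show "(2 - 2 powr (2 * K) / 2) * h powr (2 * K) - 0 * h\<^sup>2 \<le> sfbm_incr_var K s h"
      by (simp add: sfbm_incr_var_eq True powr_mult algebra_simps) argo
  qed
next
  case False
  with s have "0 < 2 * s"
    by simp
  show ?thesis
  proof (rule that[of 1 "2 * K * \<bar>2 * K - 1\<bar> * (2 * s) powr (2 * K - 2)"])
    fix h :: real assume h: "0 < h"
    from powr_second_difference_le[OF \<open>0 < 2 * s\<close> h, of "2 * K"] K
    show "1 * h powr (2 * K) - 2 * K * \<bar>2 * K - 1\<bar> * (2 * s) powr (2 * K - 2) * h\<^sup>2
            \<le> sfbm_incr_var K s h"
      using h by (simp add: sfbm_incr_var_eq add.commute)
  qed simp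
qed

lemma sfbm_incr_var_over_square_at_top:
  assumes "0 < K" "K < 1" "0 \<le> s"
  shows "filterlim (\<lambda>h. sfbm_incr_var K s h / h\<^sup>2) at_top (at_right 0)"
proof -
  obtain c C where c: "0 < c"
    and bound: "\<And>h. 0 < h \<Longrightarrow> c * h powr (2 * K) - C * h\<^sup>2 \<le> sfbm_incr_var K s h"
    using sfbm_incr_var_lower_bound[OF assms] by blast
  have "filterlim (\<lambda>h. c * h powr (2 * K - 2) - C) at_top (at_right 0)"
    using c \<open>K < 1\<close> by real_asymp
  moreover have "\<forall>\<^sub>F h in at_right 0. c * h powr (2 * K - 2) - C \<le> sfbm_incr_var K s h / h\<^sup>2"
  proof (rule eventually_mono[OF eventually_at_right_less])
    fix h :: real assume h: "0 < h"
    have "c * h powr (2 * K - 2) - C = (c * h powr (2 * K) - C * h\<^sup>2) / h\<^sup>2"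
      using h by (simp add: powr_diff powr_numeral field_simps)
    also have "\<dots> \<le> sfbm_incr_var K s h / h\<^sup>2"
      using bound[OF h] h by (simp add: divide_right_mono)
    finally show "c * h powr (2 * K - 2) - C \<le> sfbm_incr_var K s h / h\<^sup>2" .
  qed
  ultimately show ?thesis
    by (rule filterlim_at_top_mono)
qed

lemma integrable_normal_square:
  assumes "0 < \<sigma>"
  shows "integrable lborel (\<lambda>x. normal_density \<mu> \<sigma> x * x\<^sup>2)"
proof -
  have "normal_density \<mu> \<sigma> x * x\<^sup>2 = normal_density \<mu> \<sigma> x * (x - \<mu>)\<^sup>2
          + 2 * \<mu> * (normal_density \<mu> \<sigma> x * x) - \<mu>\<^sup>2 * normal_density \<mu> \<sigma> x" for x
    by algebra
  then show ?thesis
    using assms by (simp only:) (intro Bochner_Integration.integrable_add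
        Bochner_Integration.integrable_diff integrable_mult_right integrable_normal_moment
        integrable_normal_moment_nz_1 integrable_normal_density)
qed

lemma gaussian_rvE [consumes 1, case_names degenerate normal]:
  assumes "gaussian_rv M X"
  obtains c where "AE \<omega> in M. X \<omega> = c"
    | \<mu> \<sigma> where "0 < \<sigma>" "distributed M lborel X (normal_density \<mu> \<sigma>)"
  using assms unfolding gaussian_rv_def by blast

lemma (in prob_space) gaussian_rv_square_integrable:
  assumes "gaussian_rv M X"
  shows "integrable M (\<lambda>\<omega>. (X \<omega>)\<^sup>2)"
proof -
  have [measurable]: "X \<in> borel_measurable M"
    using assms by (simp add: gaussian_rv_def)
  from assms show ?thesis
  proof (cases rule: gaussian_rvE)
    case (degenerate c)
    then have "AE \<omega> in M. c\<^sup>2 = (X \<omega>)\<^sup>2"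
      by eventually_elim simp
    then show ?thesis
      by (rule integrable_cong_AE_imp[rotated 2]) simp_all
  next
    case (normal \<mu> \<sigma>)
    then show ?thesis
      using distributed_integrable[OF normal(2), of "\<lambda>x. x\<^sup>2"]
        integrable_normal_square[OF normal(1)]
      by simp
  qed
qed

lemma (in prob_space) gaussian_rv_centered_distributed:
  assumes "gaussian_rv M X" "expectation X = 0" "expectation (\<lambda>\<omega>. (X \<omega>)\<^sup>2) = v" "0 < v"
  shows "distributed M lborel X (normal_density 0 (sqrt v))"
proof -
  have [measurable]: "X \<in> borel_measurable M"
    using assms by (simp add: gaussian_rv_def)
  from assms(1) show ?thesis
  proof (cases rule: gaussian_rvE)
    case (degenerate c)
    have "expectation X = expectation (\<lambda>_. c)"
      using degenerate by (intro integral_cong_AE) auto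
    then have "c = 0"
      using assms(2) by (simp add: prob_space)
    with degenerate have "AE \<omega> in M. (X \<omega>)\<^sup>2 = 0"
      by (auto elim: AE_mp)
    then have "expectation (\<lambda>\<omega>. (X \<omega>)\<^sup>2) = expectation (\<lambda>_. 0)"
      by (intro integral_cong_AE) auto
    with assms(3,4) show ?thesis
      by simp
  next
    case (normal \<mu> \<sigma>)
    have "\<mu> = 0"
      using normal_distributed_expectation[OF normal] assms(2) by simp
    moreover have "\<sigma> = sqrt v"
      using normal_distributed_variance[OF normal] normal(1) assms(2,3)
      by (simp add: real_sqrt_unique)
    ultimately show ?thesis
      using normal(2) by simp
  qed
qed

lemma gaussian_process_sum:
  assumes "gaussian_process M T X" "finite F" "F \<subseteq> T"
  shows "gaussian_rv M (\<lambda>\<omega>. \<Sum>t\<in>F. c t * X t \<omega>)"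
  using assms unfolding gaussian_process_def by blast

lemma gaussian_process_rv:
  assumes "gaussian_process M T X" "t \<in> T"
  shows "gaussian_rv M (X t)"
  using gaussian_process_sum[OF assms(1), of "{t}" "\<lambda>_. 1"] assms(2) by simp

lemma gaussian_process_diff:
  assumes "gaussian_process M T X" "t \<in> T" "s \<in> T" "t \<noteq> s"
  shows "gaussian_rv M (\<lambda>\<omega>. X t \<omega> - X s \<omega>)"
  using gaussian_process_sum[OF assms(1), of "{t, s}" "\<lambda>u. if u = t then 1 else -1"] assms(2-4)
  by simp

lemma abs_mult_le_sum_squares:
  fixes x y :: real
  shows "\<bar>x * y\<bar> \<le> x\<^sup>2 + y\<^sup>2"
proof -
  have "2 * \<bar>x\<bar> * \<bar>y\<bar> \<le> x\<^sup>2 + y\<^sup>2"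
    using sum_squares_bound[of "\<bar>x\<bar>" "\<bar>y\<bar>"] by simp
  then show ?thesis
    unfolding abs_mult using mult_nonneg_nonneg[of "\<bar>x\<bar>" "\<bar>y\<bar>"] by linarith
qed

lemma (in prob_space) expectation_square_diff:
  fixes Y Z :: "'a \<Rightarrow> real"
  assumes [measurable]: "Y \<in> borel_measurable M" "Z \<in> borel_measurable M"
    and "integrable M (\<lambda>\<omega>. (Y \<omega>)\<^sup>2)" "integrable M (\<lambda>\<omega>. (Z \<omega>)\<^sup>2)"
  shows "expectation (\<lambda>\<omega>. (Y \<omega> - Z \<omega>)\<^sup>2)
           = expectation (\<lambda>\<omega>. Y \<omega> * Y \<omega>) - 2 * expectation (\<lambda>\<omega>. Y \<omega> * Z \<omega>)
             + expectation (\<lambda>\<omega>. Z \<omega> * Z \<omega>)"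
proof -
  have prod: "integrable M (\<lambda>\<omega>. U \<omega> * W \<omega>)" if "U \<in> {Y, Z}" "W \<in> {Y, Z}" for U W
  proof (rule Bochner_Integration.integrable_bound)
    show "integrable M (\<lambda>\<omega>. (U \<omega>)\<^sup>2 + (W \<omega>)\<^sup>2)"
      using that assms by auto
    show "(\<lambda>\<omega>. U \<omega> * W \<omega>) \<in> borel_measurable M"
      using that by auto
    show "AE \<omega> in M. norm (U \<omega> * W \<omega>) \<le> norm ((U \<omega>)\<^sup>2 + (W \<omega>)\<^sup>2)"
      using abs_mult_le_sum_squares by simp
  qed
  have "(\<lambda>\<omega>. (Y \<omega> - Z \<omega>)\<^sup>2) = (\<lambda>\<omega>. Y \<omega> * Y \<omega> - 2 * (Y \<omega> * Z \<omega>) + Z \<omega> * Z \<omega>)"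
    by (simp add: power2_eq_square algebra_simps)
  then show ?thesis
    using prod by simp
qed

lemma (in prob_space) is_sfbm_increment_distributed:
  assumes sfbm: "is_sfbm M K \<xi>" and "0 \<le> s" "0 < h" and V: "0 < sfbm_incr_var K s h"
  shows "distributed M lborel (\<lambda>\<omega>. \<xi> (s + h) \<omega> - \<xi> s \<omega>)
           (normal_density 0 (sqrt (sfbm_incr_var K s h)))"
proof (rule gaussian_rv_centered_distributed[OF _ _ _ V])
  have ts: "s + h \<in> {0..}" "s \<in> {0..}" "s + h \<noteq> s"
    using assms by auto
  have gp: "gaussian_process M {0..} \<xi>"
    using sfbm by (simp add: is_sfbm_def)
  show "gaussian_rv M (\<lambda>\<omega>. \<xi> (s + h) \<omega> - \<xi> s \<omega>)"
    by (rule gaussian_process_diff[OF gp ts])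
  show "expectation (\<lambda>\<omega>. \<xi> (s + h) \<omega> - \<xi> s \<omega>) = 0"
    using sfbm ts by (simp add: is_sfbm_def)
  show "expectation (\<lambda>\<omega>. (\<xi> (s + h) \<omega> - \<xi> s \<omega>)\<^sup>2) = sfbm_incr_var K s h"
    using sfbm ts
    by (simp add: expectation_square_diff gaussian_rv_square_integrable gaussian_process_rv[OF gp]
        is_sfbm_def sfbm_incr_var_def mult.commute)
qed

lemma normal_density_le:
  assumes "0 < \<sigma>"
  shows "normal_density \<mu> \<sigma> x \<le> 1 / \<sigma>"
proof -
  have "\<sigma> \<le> sqrt (2 * pi) * \<sigma>"
    using assms pi_gt3 by simp
  also have "\<dots> = sqrt (2 * pi * \<sigma>\<^sup>2)"
    using assms by (simp add: real_sqrt_mult)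
  finally have "1 / sqrt (2 * pi * \<sigma>\<^sup>2) \<le> 1 / \<sigma>"
    using assms by (intro divide_left_mono) auto
  then have "normal_density \<mu> \<sigma> x \<le> 1 / \<sigma> * 1"
    unfolding normal_density_def using assms by (intro mult_mono) auto
  then show ?thesis
    by simp
qed

lemma emeasure_normal_density_interval_le:
  assumes "0 < \<sigma>" "a \<le> b"
  shows "emeasure (density lborel (normal_density \<mu> \<sigma>)) {a..b} \<le> ennreal ((b - a) / \<sigma>)"
proof -
  have "emeasure (density lborel (normal_density \<mu> \<sigma>)) {a..b}
          = (\<integral>\<^sup>+x. ennreal (normal_density \<mu> \<sigma> x) * indicator {a..b} x \<partial>lborel)"
    by (rule emeasure_density) auto
  also have "\<dots> \<le> (\<integral>\<^sup>+x. ennreal (1 / \<sigma>) * indicator {a..b} x \<partial>lborel)"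
    using normal_density_le[OF assms(1)]
    by (intro nn_integral_mono mult_right_mono) (auto intro: ennreal_leI)
  also have "\<dots> = ennreal ((b - a) / \<sigma>)"
    using assms by (simp add: nn_integral_cmult_indicator ennreal_mult[symmetric])
  finally show ?thesis .
qed

lemma (in prob_space) prob_abs_add_indep_normal_le:
  assumes indep: "indep_var borel X borel R"
    and X: "distributed M lborel X (normal_density \<mu> \<sigma>)" and \<sigma>: "0 < \<sigma>" and d: "0 \<le> d"
  shows "prob {\<omega> \<in> space M. \<bar>X \<omega> + R \<omega>\<bar> \<le> d} \<le> 2 * d / \<sigma>"
proof -
  have X_meas [measurable]: "X \<in> borel_measurable M"
    and R_meas [measurable]: "R \<in> borel_measurable M"
    and joint: "distr M borel X \<Otimes>\<^sub>M distr M borel R = distr M (borel \<Otimes>\<^sub>M borel) (\<lambda>\<omega>. (X \<omega>, R \<omega>))"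
    using indep unfolding indep_var_distribution_eq by auto
  define PX where "PX = distr M borel X"
  define PR where "PR = distr M borel R"
  interpret PX: prob_space PX
    unfolding PX_def by (rule prob_space_distr[OF X_meas])
  interpret PR: prob_space PR
    unfolding PR_def by (rule prob_space_distr[OF R_meas])
  interpret PXR: pair_prob_space PX PR ..
  define A where "A = {p \<in> space (borel \<Otimes>\<^sub>M borel). \<bar>fst p + snd p\<bar> \<le> (d::real)}"
  have A: "A \<in> sets (borel \<Otimes>\<^sub>M borel)"
    unfolding A_def by measurable
  have XR: "(\<lambda>\<omega>. (X \<omega>, R \<omega>)) \<in> measurable M (borel \<Otimes>\<^sub>M borel)"
    by measurable
  have "PX = distr M lborel X"
    unfolding PX_def by (rule distr_cong) auto
  also have "\<dots> = density lborel (normal_density \<mu> \<sigma>)"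
    by (rule distributed_distr_eq_density[OF X])
  finally have PX_density: "PX = density lborel (normal_density \<mu> \<sigma>)" .
  have slice: "emeasure PX ((\<lambda>x. (x, r)) -` A) \<le> ennreal (2 * d / \<sigma>)" for r
  proof -
    have "(\<lambda>x. (x, r)) -` A = {- r - d..d - r}"
      unfolding A_def by (auto simp: space_pair_measure)
    then show ?thesis
      using emeasure_normal_density_interval_le[OF \<sigma>, of "- r - d" "d - r" \<mu>] d
      by (simp add: PX_density)
  qed
  have "{\<omega> \<in> space M. \<bar>X \<omega> + R \<omega>\<bar> \<le> d} = (\<lambda>\<omega>. (X \<omega>, R \<omega>)) -` A \<inter> space M"
    unfolding A_def by (auto simp: space_pair_measure)
  then have "emeasure M {\<omega> \<in> space M. \<bar>X \<omega> + R \<omega>\<bar> \<le> d} = emeasure (PX \<Otimes>\<^sub>M PR) A"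
    using emeasure_distr[OF XR A] by (simp add: PX_def PR_def joint)
  also have "\<dots> = (\<integral>\<^sup>+r. emeasure PX ((\<lambda>x. (x, r)) -` A) \<partial>PR)"
    using A by (intro PXR.emeasure_pair_measure_alt2) (simp add: PX_def PR_def)
  also have "\<dots> \<le> (\<integral>\<^sup>+r. ennreal (2 * d / \<sigma>) \<partial>PR)"
    by (intro nn_integral_mono slice)
  also have "\<dots> = ennreal (2 * d / \<sigma>)"
    by (simp add: PR.emeasure_space_1)
  finally show ?thesis
    using d \<sigma> by (simp add: emeasure_eq_measure)
qed

lemma (in prob_space) indep_var_increment_component:
  fixes \<xi> :: "'i \<Rightarrow> real \<Rightarrow> 'a \<Rightarrow> real"
  assumes indep: "indep_vars (\<lambda>_. PiM {0..} (\<lambda>_. borel)) (\<lambda>i \<omega>. restrict (\<lambda>t. \<xi> i t \<omega>) {0..}) I"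
    and "finite I" "j \<in> I" "0 \<le> s" "0 \<le> t"
  shows "indep_var borel (\<lambda>\<omega>. a j * (\<xi> j t \<omega> - \<xi> j s \<omega>))
           borel (\<lambda>\<omega>. \<Sum>i\<in>I - {j}. a i * (\<xi> i t \<omega> - \<xi> i s \<omega>))"
proof -
  define incr where "incr i f = a i * (f t - f s)" for i and f :: "real \<Rightarrow> real"
  have "(\<lambda>f. f u) \<in> borel_measurable (PiM {0..} (\<lambda>_. borel :: real measure))"
    if "0 \<le> u" for u :: real
    using that by (intro measurable_component_singleton) auto
  then have "incr i \<in> borel_measurable (PiM {0..} (\<lambda>_. borel))" for i
    using assms(4,5) unfolding incr_def by measurable
  then have "indep_vars (\<lambda>_. borel) (\<lambda>i \<omega>. incr i (restrict (\<lambda>t. \<xi> i t \<omega>) {0..})) I"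
    by (rule indep_vars_compose2[OF indep])
  moreover have "(\<lambda>i \<omega>. incr i (restrict (\<lambda>t. \<xi> i t \<omega>) {0..})) = (\<lambda>i \<omega>. a i * (\<xi> i t \<omega> - \<xi> i s \<omega>))"
    using assms(4,5) by (simp add: incr_def)
  ultimately show ?thesis
    using indep_vars_sum[of "I - {j}" j] assms(2,3) by (simp add: insert_absorb)
qed

lemma (in prob_space) prob_abs_msfbm_increment_le:
  assumes indep: "indep_vars (\<lambda>_. PiM {0..} (\<lambda>_. borel))
                   (\<lambda>i \<omega>. restrict (\<lambda>t. \<xi> i t \<omega>) {0..}) {..<N}"
    and sfbm: "is_sfbm M K (\<xi> j)" and j: "j < N" "a j \<noteq> 0"
    and "0 \<le> s" "0 < h" and V: "0 < sfbm_incr_var K s h" and "0 \<le> d"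
  shows "prob {\<omega> \<in> space M. \<bar>msfbm N a \<xi> (s + h) \<omega> - msfbm N a \<xi> s \<omega>\<bar> \<le> d}
           \<le> 2 * d / (\<bar>a j\<bar> * sqrt (sfbm_incr_var K s h))"
proof -
  have "distributed M lborel (\<lambda>\<omega>. 0 + a j * (\<xi> j (s + h) \<omega> - \<xi> j s \<omega>))
          (normal_density (0 + a j * 0) (\<bar>a j\<bar> * sqrt (sfbm_incr_var K s h)))"
    using is_sfbm_increment_distributed[OF sfbm \<open>0 \<le> s\<close> \<open>0 < h\<close> V] V j(2)
    by (intro normal_density_affine) auto
  then have "prob {\<omega> \<in> space M. \<bar>a j * (\<xi> j (s + h) \<omega> - \<xi> j s \<omega>)
                + (\<Sum>i\<in>{..<N} - {j}. a i * (\<xi> i (s + h) \<omega> - \<xi> i s \<omega>))\<bar> \<le> d}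
               \<le> 2 * d / (\<bar>a j\<bar> * sqrt (sfbm_incr_var K s h))"
    using assms j V
    by (intro prob_abs_add_indep_normal_le indep_var_increment_component[OF indep]) auto
  moreover have "msfbm N a \<xi> (s + h) \<omega> - msfbm N a \<xi> s \<omega>
      = a j * (\<xi> j (s + h) \<omega> - \<xi> j s \<omega>) + (\<Sum>i\<in>{..<N} - {j}. a i * (\<xi> i (s + h) \<omega> - \<xi> i s \<omega>))"
    for \<omega>
    using j(1) by (simp add: msfbm_def sum_subtractf[symmetric] right_diff_distrib sum.remove)
  ultimately show ?thesis
    by simp
qed

lemma (in prob_space) prob_abs_msfbm_increment_le_tendsto_0:
  assumes indep: "indep_vars (\<lambda>_. PiM {0..} (\<lambda>_. borel))
                   (\<lambda>i \<omega>. restrict (\<lambda>t. \<xi> i t \<omega>) {0..}) {..<N}"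
    and sfbm: "is_sfbm M K (\<xi> j)" and K: "0 < K" "K < 1" and j: "j < N" "a j \<noteq> 0"
    and s: "0 \<le> s" and m: "0 \<le> m"
  shows "((\<lambda>h. prob {\<omega> \<in> space M. \<bar>msfbm N a \<xi> (s + h) \<omega> - msfbm N a \<xi> s \<omega>\<bar> \<le> m * h})
           \<longlongrightarrow> 0) (at_right 0)"
proof (rule tendsto_sandwich[OF _ _ tendsto_const])
  define V where "V = sfbm_incr_var K s"
  have V_lim: "filterlim (\<lambda>h. V h / h\<^sup>2) at_top (at_right 0)"
    unfolding V_def using K s by (rule sfbm_incr_var_over_square_at_top)
  then have "((\<lambda>h. 2 * m / \<bar>a j\<bar> * sqrt (inverse (V h / h\<^sup>2))) \<longlongrightarrow> 2 * m / \<bar>a j\<bar> * sqrt 0)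
               (at_right 0)"
    by (intro tendsto_intros tendsto_inverse_0_at_top)
  then show "((\<lambda>h. 2 * m / \<bar>a j\<bar> * sqrt (inverse (V h / h\<^sup>2))) \<longlongrightarrow> 0) (at_right 0)"
    by simp
  have "\<forall>\<^sub>F h in at_right 0. 0 < h \<and> 0 < V h / h\<^sup>2"
    using eventually_at_right_less V_lim[THEN filterlim_at_top_dense[THEN iffD1], rule_format, of 0]
    by eventually_elim auto
  then show "\<forall>\<^sub>F h in at_right 0.
      prob {\<omega> \<in> space M. \<bar>msfbm N a \<xi> (s + h) \<omega> - msfbm N a \<xi> s \<omega>\<bar> \<le> m * h}
        \<le> 2 * m / \<bar>a j\<bar> * sqrt (inverse (V h / h\<^sup>2))"
  proof eventually_elim
    case (elim h)
    then have "0 < V h"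
      by (simp add: zero_less_divide_iff)
    then have "prob {\<omega> \<in> space M. \<bar>msfbm N a \<xi> (s + h) \<omega> - msfbm N a \<xi> s \<omega>\<bar> \<le> m * h}
                 \<le> 2 * (m * h) / (\<bar>a j\<bar> * sqrt (V h))"
      unfolding V_def using indep sfbm j s m elim by (intro prob_abs_msfbm_increment_le) auto
    also have "\<dots> = 2 * m / \<bar>a j\<bar> * sqrt (inverse (V h / h\<^sup>2))"
      using elim \<open>0 < V h\<close> by (simp add: real_sqrt_divide field_simps)
    finally show ?case .
  qed
qed (simp add: eventually_at_right_less)

lemma (in prob_space) AE_frequently_not_at_right_0:
  fixes P :: "real \<Rightarrow> 'a \<Rightarrow> bool"
  assumes sets: "\<And>h. 0 < h \<Longrightarrow> {\<omega> \<in> space M. P h \<omega>} \<in> events"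
    and lim: "((\<lambda>h. prob {\<omega> \<in> space M. P h \<omega>}) \<longlongrightarrow> 0) (at_right 0)"
  shows "AE \<omega> in M. \<exists>\<^sub>F h in at_right 0. \<not> P h \<omega>"
proof -
  define hs :: "nat \<Rightarrow> real" where "hs n = 1 / Suc n" for n
  have hs: "filterlim hs (at_right 0) sequentially"
    unfolding hs_def by real_asymp
  have hs_pos: "0 < hs n" for n
    by (simp add: hs_def)
  define B where "B k = (\<Inter>n\<in>{k..}. {\<omega> \<in> space M. P (hs n) \<omega>})" for k
  have B_null: "B k \<in> null_sets M" for k
  proof -
    have B_sets: "B k \<in> events"
      unfolding B_def using sets hs_pos by (intro sets.countable_INT') auto
    have "(\<lambda>n. prob {\<omega> \<in> space M. P (hs n) \<omega>}) \<longlonglongrightarrow> 0"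
      by (rule filterlim_compose[OF lim hs])
    moreover have "\<forall>n\<ge>k. prob (B k) \<le> prob {\<omega> \<in> space M. P (hs n) \<omega>}"
      using sets hs_pos by (auto intro!: finite_measure_mono simp: B_def)
    ultimately have "prob (B k) \<le> 0"
      by (intro LIMSEQ_le_const) auto
    then show ?thesis
      using B_sets by (simp add: null_sets_def emeasure_eq_measure measure_le_0_iff)
  qed
  show ?thesis
  proof (rule AE_I'[OF null_sets_UN[OF B_null]], intro subsetI)
    fix \<omega> assume "\<omega> \<in> {\<omega> \<in> space M. \<not> (\<exists>\<^sub>F h in at_right 0. \<not> P h \<omega>)}"
    then have \<omega>: "\<omega> \<in> space M" and ev: "\<forall>\<^sub>F h in at_right 0. P h \<omega>"
      by (simp_all add: not_frequently)
    have "\<forall>\<^sub>F n in sequentially. P (hs n) \<omega>"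
      using ev by (rule filterlim_iff[THEN iffD1, OF hs, rule_format])
    then obtain k where "\<forall>n\<ge>k. P (hs n) \<omega>"
      by (auto simp: eventually_sequentially)
    then show "\<omega> \<in> (\<Union>k. B k)"
      using \<omega> by (auto simp: B_def)
  qed
qed

lemma tendsto_SUP_abs_difference_quotient_PInfty:
  fixes f :: "real \<Rightarrow> real"
  assumes "0 \<le> t0" and freq: "\<And>m::nat. \<exists>\<^sub>F h in at_right 0. real m * h < \<bar>f (t0 + h) - f t0\<bar>"
  shows "((\<lambda>\<epsilon>. SUP t\<in>({t0 - \<epsilon>..t0 + \<epsilon>} \<inter> {0..}) - {t0}. ereal \<bar>(f t - f t0) / (t - t0)\<bar>)
           \<longlongrightarrow> \<infinity>) (at_right 0)" (is "(?F \<longlongrightarrow> \<infinity>) _")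
  unfolding tendsto_PInfty
proof
  fix r :: real
  obtain m :: nat where "r < m"
    using reals_Archimedean2 by blast
  show "\<forall>\<^sub>F \<epsilon> in at_right 0. ereal r < ?F \<epsilon>"
  proof (rule eventually_mono[OF eventually_at_right_less])
    fix \<epsilon> :: real assume "0 < \<epsilon>"
    then have "\<forall>\<^sub>F h in at_right 0. 0 < h \<and> h < \<epsilon>"
      unfolding eventually_at_right_field by blast
    then obtain h where h: "0 < h" "h < \<epsilon>" "real m * h < \<bar>f (t0 + h) - f t0\<bar>"
      using frequently_eventually_conj[OF freq[of m]] by (auto elim: frequentlyE)
    have "r * h < \<bar>f (t0 + h) - f t0\<bar>"
      using mult_strict_right_mono[OF \<open>r < m\<close> h(1)] h(3) by linarith
    then have "r < \<bar>(f (t0 + h) - f t0) / (t0 + h - t0)\<bar>"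
      using h by (simp add: abs_divide pos_less_divide_eq)
    also have "ereal \<dots> \<le> ?F \<epsilon>"
      using h \<open>0 \<le> t0\<close> by (intro SUP_upper) auto
    finally show "ereal r < ?F \<epsilon>"
      by simp
  qed
qed

theorem lemma13:
  fixes M :: "'a measure" and N :: nat and H a :: "nat \<Rightarrow> real"
    and \<xi> :: "nat \<Rightarrow> real \<Rightarrow> 'a \<Rightarrow> real" and t0 :: real
  assumes "prob_space M"
    and "N \<ge> 1"
    and "\<forall>i<N. 0 < H i \<and> H i < 1"
    and "\<exists>i<N. a i \<noteq> 0"
    and "\<forall>i<N. is_sfbm M (H i) (\<xi> i)"
    and "prob_space.indep_vars M (\<lambda>_. PiM {0..} (\<lambda>_. borel))
           (\<lambda>i \<omega>. restrict (\<lambda>t. \<xi> i t \<omega>) {0..}) {..<N}"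
    and "t0 \<ge> 0"
  shows "AE \<omega> in M.
           ((\<lambda>\<epsilon>. SUP t\<in>({t0 - \<epsilon>..t0 + \<epsilon>} \<inter> {0..}) - {t0}.
                 ereal \<bar>(msfbm N a \<xi> t \<omega> - msfbm N a \<xi> t0 \<omega>) / (t - t0)\<bar>)
            \<longlongrightarrow> \<infinity>) (at_right 0)"
proof -
  interpret prob_space M
    by (rule assms(1))
  obtain j where j: "j < N" "a j \<noteq> 0"
    using assms(4) by blast
  have "msfbm N a \<xi> t \<in> borel_measurable M" if "0 \<le> t" for t
    using assms(5) that unfolding msfbm_def is_sfbm_def
    by (intro borel_measurable_sum borel_measurable_times) auto
  moreover have "((\<lambda>h. prob {\<omega> \<in> space M.
                   \<bar>msfbm N a \<xi> (t0 + h) \<omega> - msfbm N a \<xi> t0 \<omega>\<bar> \<le> real m * h}) \<longlongrightarrow> 0) (at_right 0)"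
    for m :: nat
    using assms(3,5,6,7) j by (intro prob_abs_msfbm_increment_le_tendsto_0) auto
  ultimately have "AE \<omega> in M. \<forall>m::nat. \<exists>\<^sub>F h in at_right 0.
                     \<not> \<bar>msfbm N a \<xi> (t0 + h) \<omega> - msfbm N a \<xi> t0 \<omega>\<bar> \<le> real m * h"
    unfolding AE_all_countable using assms(7) by (intro allI AE_frequently_not_at_right_0) auto
  then show ?thesis
  proof eventually_elim
    case (elim \<omega>)
    then show ?case
      using assms(7) by (intro tendsto_SUP_abs_difference_quotient_PInfty) (auto simp: not_le)
  qed
qed

end
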